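(* Let $(\rho_n)$ be a sequence of positive functions on $\mathbb{R}^2$ such that there exist $r>0$ and $\sigma>0$ with $\int_{B_r(0)}\rho_n\,dx>\sigma$ for all $n\in\mathbb{N}$. Let $(u_n)$ be bounded in $L^2(\mathbb{R}^2)$ with $\sup_n B_1(\rho_n,u_n^2)<+\infty$. Then $\int_{\mathbb{R}^2}\log(1+|x|)u_n^2(x)\,dx$ is bounded in $n$. If moreover $B_1(\rho_n,u_n^2)\to0$ and $\|u_n\|_2\to0$, then $\int_{\mathbb{R}^2}\log(1+|x|)u_n^2(x)\,dx\to0$ as $n\to\infty$.
   Context: $B_1(f,g):=\iint_{\mathbb{R}^2\times\mathbb{R}^2}\log(1+|x-y|)f(x)g(y)\,dx\,dy$ for nonnegative measurable $f,g$; $B_r(x)$ is the ball of radius $r$ centered at $x$. *)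

theory Defs
  imports "HOL-Analysis.Analysis"
begin

definition B1 :: "(real^2 \<Rightarrow> real) \<Rightarrow> (real^2 \<Rightarrow> real) \<Rightarrow> ennreal" where
  "B1 f g = (\<integral>\<^sup>+ x. (\<integral>\<^sup>+ y. ennreal (ln (1 + norm (x - y)) * f x * g y) \<partial>lebesgue) \<partial>lebesgue)"

end

theory Submission
  imports Defs
begin

text \<open>For \<open>|x| \<le> r\<close> the triangle inequality gives
  \<open>log (1 + |y|) \<le> log (1 + |x - y|) + log (1 + r)\<close>. Integrating this against \<open>\<rho>(x) u\<^sup>2(y)\<close> over
  \<open>x \<in> B\<^sub>r(0)\<close>, where \<open>\<rho>\<close> has mass at least \<open>\<sigma>\<close>, yields
  \<open>\<integral> log (1 + |y|) u\<^sup>2 \<le> B\<^sub>1(\<rho>, u\<^sup>2) / \<sigma> + log (1 + r) \<parallel>u\<parallel>\<^sub>2\<^sup>2\<close>, which implies both claims.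
  Only the positive part of \<open>log (1 + |y|) - log (1 + r)\<close> is integrated against \<open>\<rho>\<close>, so that no
  division by the (possibly infinite) mass of \<open>\<rho>\<close> on the ball is needed.\<close>

lemma ident_borel_measurable_lebesgue [measurable]:
  "(\<lambda>x::'a::euclidean_space. x) \<in> borel_measurable lebesgue"
  using id_borel_measurable_lebesgue by (simp add: id_def)

lemma ln_one_plus_norm_le:
  fixes x y :: "'a::real_normed_vector"
  assumes "norm x \<le> r"
  shows "ln (1 + norm y) \<le> ln (1 + norm (x - y)) + ln (1 + r)"
proof -
  have r: "r \<ge> 0" using assms norm_ge_zero order_trans by blast
  have "norm y \<le> norm (x - y) + norm x"
    by (metis norm_triangle_sub norm_minus_commute add.commute)
  also have "\<dots> \<le> norm (x - y) + r + norm (x - y) * r"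
    using assms r by (smt (verit) mult_nonneg_nonneg norm_ge_zero)
  finally have "1 + norm y \<le> (1 + norm (x - y)) * (1 + r)"
    by (simp add: algebra_simps)
  then have "ln (1 + norm y) \<le> ln ((1 + norm (x - y)) * (1 + r))"
    using r by (subst ln_le_cancel_iff) (auto intro!: mult_pos_pos add_pos_nonneg)
  also have "\<dots> = ln (1 + norm (x - y)) + ln (1 + r)"
    using r by (intro ln_mult_pos) (auto intro: add_pos_nonneg)
  finally show ?thesis .
qed

lemma nn_integral_mult_le_positive_part:
  assumes [measurable]: "h \<in> borel_measurable M" "g \<in> borel_measurable M"
    and g: "\<And>y. g y \<ge> 0" and c: "c \<ge> 0"
  shows "(\<integral>\<^sup>+ y. ennreal (h y * g y) \<partial>M)
    \<le> (\<integral>\<^sup>+ y. ennreal (max 0 (h y - c) * g y) \<partial>M) + ennreal c * (\<integral>\<^sup>+ y. ennreal (g y) \<partial>M)"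
proof -
  have "(\<integral>\<^sup>+ y. ennreal (h y * g y) \<partial>M)
      \<le> (\<integral>\<^sup>+ y. ennreal (max 0 (h y - c) * g y) + ennreal c * ennreal (g y) \<partial>M)"
  proof (rule nn_integral_mono)
    fix y
    have "h y * g y \<le> max 0 (h y - c) * g y + c * g y"
      using g[of y] by (simp add: mult_right_mono flip: distrib_right)
    then show "ennreal (h y * g y) \<le> ennreal (max 0 (h y - c) * g y) + ennreal c * ennreal (g y)"
      using g[of y] c by (simp add: ennreal_leI flip: ennreal_plus ennreal_mult)
  qed
  also have "\<dots> = (\<integral>\<^sup>+ y. ennreal (max 0 (h y - c) * g y) \<partial>M) + ennreal c * (\<integral>\<^sup>+ y. ennreal (g y) \<partial>M)"
    by (simp add: nn_integral_add nn_integral_cmult)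
  finally show ?thesis .
qed

lemma B1_ge_ball_mass_mult:
  fixes f g :: "real^2 \<Rightarrow> real"
  assumes [measurable]: "f \<in> borel_measurable lebesgue" "g \<in> borel_measurable lebesgue"
    and f: "\<And>x. f x \<ge> 0" and g: "\<And>y. g y \<ge> 0"
  shows "(\<integral>\<^sup>+ x\<in>ball 0 r. ennreal (f x) \<partial>lebesgue)
      * (\<integral>\<^sup>+ y. ennreal (max 0 (ln (1 + norm y) - ln (1 + r)) * g y) \<partial>lebesgue)
    \<le> B1 f g"
proof -
  define W where "W = (\<integral>\<^sup>+ y. ennreal (max 0 (ln (1 + norm y) - ln (1 + r)) * g y) \<partial>lebesgue)"
  have [measurable]: "ball 0 r \<in> sets lebesgue" by simp
  have "(\<integral>\<^sup>+ x\<in>ball 0 r. ennreal (f x) \<partial>lebesgue) * W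
      = (\<integral>\<^sup>+ x. ennreal (f x) * indicator (ball 0 r) x * W \<partial>lebesgue)"
    by (rule nn_integral_multc[symmetric]) measurable
  also have "\<dots> \<le> B1 f g"
    unfolding B1_def
  proof (rule nn_integral_mono)
    fix x :: "real^2"
    show "ennreal (f x) * indicator (ball 0 r) x * W
        \<le> (\<integral>\<^sup>+ y. ennreal (ln (1 + norm (x - y)) * f x * g y) \<partial>lebesgue)"
    proof (cases "x \<in> ball 0 r")
      case True
      have "ennreal (f x) * indicator (ball 0 r) x * W
          = (\<integral>\<^sup>+ y. ennreal (f x) * ennreal (max 0 (ln (1 + norm y) - ln (1 + r)) * g y) \<partial>lebesgue)"
        using True unfolding W_def by (subst nn_integral_cmult; (measurable)?; simp)
      also have "\<dots> \<le> (\<integral>\<^sup>+ y. ennreal (ln (1 + norm (x - y)) * f x * g y) \<partial>lebesgue)"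
      proof (rule nn_integral_mono)
        fix y
        have "max 0 (ln (1 + norm y) - ln (1 + r)) \<le> ln (1 + norm (x - y))"
          using ln_one_plus_norm_le[of x r y] True by simp
        then have "f x * (max 0 (ln (1 + norm y) - ln (1 + r)) * g y) \<le> f x * (ln (1 + norm (x - y)) * g y)"
          using f[of x] g[of y] by (intro mult_left_mono mult_right_mono) auto
        then show "ennreal (f x) * ennreal (max 0 (ln (1 + norm y) - ln (1 + r)) * g y)
            \<le> ennreal (ln (1 + norm (x - y)) * f x * g y)"
          using f[of x] g[of y] by (simp add: ennreal_leI ac_simps flip: ennreal_mult)
      qed
      finally show ?thesis .
    qed simp
  qed
  finally show ?thesis unfolding W_def .
qed

lemma log_moment_le_B1:
  fixes f g :: "real^2 \<Rightarrow> real"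
  assumes [measurable]: "f \<in> borel_measurable lebesgue" "g \<in> borel_measurable lebesgue"
    and f: "\<And>x. f x \<ge> 0" and g: "\<And>y. g y \<ge> 0"
    and r: "r \<ge> 0" and \<sigma>: "\<sigma> > 0"
    and mass: "ennreal \<sigma> \<le> (\<integral>\<^sup>+ x\<in>ball 0 r. ennreal (f x) \<partial>lebesgue)"
  shows "(\<integral>\<^sup>+ y. ennreal (ln (1 + norm y) * g y) \<partial>lebesgue)
    \<le> ennreal (1 / \<sigma>) * B1 f g + ennreal (ln (1 + r)) * (\<integral>\<^sup>+ y. ennreal (g y) \<partial>lebesgue)"
proof -
  define W where "W = (\<integral>\<^sup>+ y. ennreal (max 0 (ln (1 + norm y) - ln (1 + r)) * g y) \<partial>lebesgue)"
  have "W = ennreal (1 / \<sigma>) * (ennreal \<sigma> * W)"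
    using \<sigma> by (simp add: mult.assoc[symmetric] flip: ennreal_mult)
  also have "\<dots> \<le> ennreal (1 / \<sigma>) * ((\<integral>\<^sup>+ x\<in>ball 0 r. ennreal (f x) \<partial>lebesgue) * W)"
    using mass by (intro mult_left_mono mult_right_mono) auto
  also have "\<dots> \<le> ennreal (1 / \<sigma>) * B1 f g"
    using B1_ge_ball_mass_mult[OF assms(1,2) f g] unfolding W_def by (intro mult_left_mono) auto
  finally have "W \<le> ennreal (1 / \<sigma>) * B1 f g" .
  moreover have "(\<integral>\<^sup>+ y. ennreal (ln (1 + norm y) * g y) \<partial>lebesgue)
      \<le> W + ennreal (ln (1 + r)) * (\<integral>\<^sup>+ y. ennreal (g y) \<partial>lebesgue)"
    unfolding W_def using g r by (intro nn_integral_mult_le_positive_part) auto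
  ultimately show ?thesis
    by (meson add_right_mono order_trans)
qed

theorem lemma3p1:
  fixes \<rho> u :: "nat \<Rightarrow> real^2 \<Rightarrow> real" and r \<sigma> :: real
  assumes rho_meas: "\<And>n. \<rho> n \<in> borel_measurable lebesgue"
    and rho_pos: "\<And>n x. \<rho> n x > 0"
    and r_pos: "r > 0" and sigma_pos: "\<sigma> > 0"
    and rho_mass: "\<And>n. (\<integral>\<^sup>+ x\<in>ball 0 r. ennreal (\<rho> n x) \<partial>lebesgue) > ennreal \<sigma>"
    and u_meas: "\<And>n. u n \<in> borel_measurable lebesgue"
    and u_L2bdd: "\<exists>C::real. \<forall>n. (\<integral>\<^sup>+ x. ennreal ((u n x)^2) \<partial>lebesgue) \<le> ennreal C"
    and B1_bdd: "\<exists>C::real. \<forall>n. B1 (\<rho> n) (\<lambda>x. (u n x)^2) \<le> ennreal C"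
  shows "(\<exists>M::real. \<forall>n. (\<integral>\<^sup>+ x. ennreal (ln (1 + norm x) * (u n x)^2) \<partial>lebesgue) \<le> ennreal M)
    \<and> (((\<lambda>n. B1 (\<rho> n) (\<lambda>x. (u n x)^2)) \<longlonglongrightarrow> 0)
         \<and> ((\<lambda>n. (\<integral>\<^sup>+ x. ennreal ((u n x)^2) \<partial>lebesgue)) \<longlonglongrightarrow> 0)
       \<longrightarrow> ((\<lambda>n. (\<integral>\<^sup>+ x. ennreal (ln (1 + norm x) * (u n x)^2) \<partial>lebesgue)) \<longlonglongrightarrow> 0))"
proof -
  define L where "L n = (\<integral>\<^sup>+ x. ennreal (ln (1 + norm x) * (u n x)^2) \<partial>lebesgue)" for n
  define U where "U n = (\<integral>\<^sup>+ x. ennreal ((u n x)^2) \<partial>lebesgue)" for n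
  define B where "B n = B1 (\<rho> n) (\<lambda>x. (u n x)^2)" for n
  have L_le: "L n \<le> ennreal (1 / \<sigma>) * B n + ennreal (ln (1 + r)) * U n" for n
    unfolding L_def U_def B_def
    using rho_meas u_meas rho_pos r_pos sigma_pos rho_mass
    by (intro log_moment_le_B1) (auto intro: less_imp_le)
  obtain C\<^sub>B C\<^sub>U where C\<^sub>B: "\<And>n. B n \<le> ennreal C\<^sub>B" and C\<^sub>U: "\<And>n. U n \<le> ennreal C\<^sub>U"
    using B1_bdd u_L2bdd unfolding B_def U_def by blast
  define Y where "Y = ennreal (1 / \<sigma>) * ennreal C\<^sub>B + ennreal (ln (1 + r)) * ennreal C\<^sub>U"
  have "L n \<le> ennreal (enn2real Y)" for n
  proof -
    have "L n \<le> Y"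
      unfolding Y_def using L_le[of n] C\<^sub>B[of n] C\<^sub>U[of n]
      by (meson add_mono mult_left_mono order_trans zero_le)
    then show ?thesis by (simp add: Y_def ennreal_mult_less_top)
  qed
  moreover have "L \<longlonglongrightarrow> 0" if "B \<longlonglongrightarrow> 0" "U \<longlonglongrightarrow> 0"
  proof (rule tendsto_sandwich[OF _ _ tendsto_const])
    have "(\<lambda>n. ennreal (1 / \<sigma>) * B n + ennreal (ln (1 + r)) * U n)
        \<longlonglongrightarrow> ennreal (1 / \<sigma>) * 0 + ennreal (ln (1 + r)) * 0"
      using that by (intro tendsto_intros) auto
    then show "(\<lambda>n. ennreal (1 / \<sigma>) * B n + ennreal (ln (1 + r)) * U n) \<longlonglongrightarrow> 0"
      by simp
  qed (use L_le in auto)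
  ultimately show ?thesis
    unfolding L_def U_def B_def by blast
qed

end
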